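(* A Boolean function $f:\{0,1\}^n\to\{0,1\}^m$ is fully balanced if and only if its image $\operatorname{img}(f)$ is an affine subspace of $\mathbb{F}_2^m$ and the fibre size $\#f^{-1}(\mathbf{w})$ is the same for every $\mathbf{w}\in\operatorname{img}(f)$.
   Context: Strings in $\{0,1\}^k$ are identified with vectors of $\mathbb{F}_2^k$; $\mathbf{a}\cdot\mathbf{b}=\bigoplus_i a_ib_i$ (mod 2). For $\mathbf{y}\in\{0,1\}^m$, $f$ is $\mathbf{y}$-balanced if $f(\mathbf{x})\cdot\mathbf{y}=0$ for exactly half of the $\mathbf{x}\in\{0,1\}^n$ and $=1$ for the other half, and $\mathbf{y}$-constant if $f(\mathbf{x})\cdot\mathbf{y}$ is the same for all $\mathbf{x}$. $f$ is fully balanced if for every $\mathbf{y}\in\{0,1\}^m$, $f$ is either $\mathbf{y}$-balanced or $\mathbf{y}$-constant. *)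

theory Defs
  imports Main
begin

text \<open>Vectors of F_2^k are bit strings of length k, represented as bool lists
  (True = 1, False = 0). Addition in F_2^k is componentwise xor.\<close>

definition vecs :: "nat \<Rightarrow> bool list set" where
  "vecs k = {xs. length xs = k}"

definition vadd :: "bool list \<Rightarrow> bool list \<Rightarrow> bool list" where
  "vadd a b = map2 (\<noteq>) a b"

definition dot :: "bool list \<Rightarrow> bool list \<Rightarrow> bool" where
  "dot a b = odd (length (filter id (map2 (\<and>) a b)))"

definition y_balanced :: "nat \<Rightarrow> (bool list \<Rightarrow> bool list) \<Rightarrow> bool list \<Rightarrow> bool" where
  "y_balanced n f y \<longleftrightarrow>
     2 * card {x \<in> vecs n. dot (f x) y = False} = 2 ^ n \<and>
     2 * card {x \<in> vecs n. dot (f x) y = True} = 2 ^ n"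

definition y_constant :: "nat \<Rightarrow> (bool list \<Rightarrow> bool list) \<Rightarrow> bool list \<Rightarrow> bool" where
  "y_constant n f y \<longleftrightarrow> (\<exists>c. \<forall>x \<in> vecs n. dot (f x) y = c)"

definition fully_balanced :: "nat \<Rightarrow> nat \<Rightarrow> (bool list \<Rightarrow> bool list) \<Rightarrow> bool" where
  "fully_balanced n m f \<longleftrightarrow> (\<forall>y \<in> vecs m. y_balanced n f y \<or> y_constant n f y)"

text \<open>Linear subspace of F_2^m (over F_2 the only scalars are 0 and 1).\<close>
definition linear_subspace :: "nat \<Rightarrow> bool list set \<Rightarrow> bool" where
  "linear_subspace m V \<longleftrightarrow> V \<subseteq> vecs m \<and> replicate m False \<in> V \<and>
     (\<forall>u \<in> V. \<forall>v \<in> V. vadd u v \<in> V)"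

definition affine_subspace :: "nat \<Rightarrow> bool list set \<Rightarrow> bool" where
  "affine_subspace m S \<longleftrightarrow>
     (\<exists>a \<in> vecs m. \<exists>V. linear_subspace m V \<and> S = vadd a ` V)"

end

theory Submission
  imports Defs
begin

text \<open>Everything is read off the Walsh transform
  \<open>W(y) = \<Sum>\<^sub>x (-1)\<^bsup>f(x)\<cdot>y\<^esup>\<close>: \<open>f\<close> is \<open>y\<close>-balanced iff \<open>W(y) = 0\<close>
  and \<open>y\<close>-constant iff \<open>|W(y)| = 2\<^sup>n\<close>. The \<open>y\<close> for which \<open>f\<close> is \<open>y\<close>-constant form
  a subspace \<open>Y\<close>. If \<open>f\<close> is fully balanced, Fourier inversion gives
  \<open>2\<^sup>m #f\<^sup>-\<^sup>1(w) = 2\<^sup>n |Y| [a + w \<in> Y\<^sup>\<bottom>]\<close> with \<open>a\<close> any value of \<open>f\<close>,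
  so the image is \<open>a + Y\<^sup>\<bottom>\<close> and all fibres have the same size. Conversely, if
  the image is \<open>a + V\<close> with equal fibres, \<open>W(y)\<close> is a multiple of the character sum
  over \<open>V\<close>, which vanishes unless \<open>y \<in> V\<^sup>\<bottom>\<close>, where \<open>f\<close> is \<open>y\<close>-constant.\<close>

lemma dot_Nil1 [simp]: "dot [] b = False"
  by (simp add: dot_def)

lemma dot_Nil2 [simp]: "dot a [] = False"
  by (simp add: dot_def)

lemma dot_Cons [simp]: "dot (x # xs) (y # ys) = ((x \<and> y) \<noteq> dot xs ys)"
  by (cases x; cases y) (simp_all add: dot_def)

lemma vadd_Nil1 [simp]: "vadd [] b = []"
  by (simp add: vadd_def)

lemma vadd_Nil2 [simp]: "vadd a [] = []"
  by (simp add: vadd_def)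

lemma vadd_Cons [simp]: "vadd (x # xs) (y # ys) = (x \<noteq> y) # vadd xs ys"
  by (simp add: vadd_def)

lemma length_vadd [simp]: "length (vadd a b) = min (length a) (length b)"
  by (simp add: vadd_def)

lemma dot_comm: "dot a b = dot b a"
proof (induction a arbitrary: b)
  case (Cons x xs)
  then show ?case by (cases b) auto
qed simp

lemma dot_vadd_right: "length y = length z \<Longrightarrow> dot u (vadd y z) = (dot u y \<noteq> dot u z)"
proof (induction u arbitrary: y z)
  case (Cons x xs)
  then show ?case by (cases y; cases z) auto
qed simp

lemma dot_vadd_left: "length y = length z \<Longrightarrow> dot (vadd y z) u = (dot y u \<noteq> dot z u)"
  by (metis dot_comm dot_vadd_right)

lemma dot_replicate_False [simp]: "dot u (replicate k False) = False"
proof (induction k arbitrary: u)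
  case (Suc k)
  then show ?case by (cases u) auto
qed simp

lemma dot_replicate_False_left [simp]: "dot (replicate k False) u = False"
  by (metis dot_comm dot_replicate_False)

lemma vadd_vadd_self: "length a = length b \<Longrightarrow> vadd a (vadd a b) = b"
proof (induction a arbitrary: b)
  case (Cons x xs)
  then show ?case by (cases b) auto
qed simp

lemma vadd_eq_replicate_False_iff:
  "length u = length w \<Longrightarrow> vadd u w = replicate (length u) False \<longleftrightarrow> u = w"
proof (induction u arbitrary: w)
  case (Cons x xs)
  then show ?case by (cases w) auto
qed simp

lemma vecs_Suc: "vecs (Suc m) = Cons True ` vecs m \<union> Cons False ` vecs m"
  by (auto simp: vecs_def length_Suc_conv image_iff)

lemma vecs_eq_lists: "vecs k = {xs. set xs \<subseteq> (UNIV :: bool set) \<and> length xs = k}"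
  by (simp add: vecs_def)

lemma finite_vecs [simp]: "finite (vecs k)"
  unfolding vecs_eq_lists by (rule finite_lists_length_eq) simp

lemma card_vecs: "card (vecs k) = 2 ^ k"
  unfolding vecs_eq_lists by (subst card_lists_length_eq) simp_all

lemma vadd_image_eq:
  assumes "a \<in> vecs m" and "V \<subseteq> vecs m"
  shows "vadd a ` V = {w \<in> vecs m. vadd a w \<in> V}"
proof -
  have "w \<in> vadd a ` V" if "w \<in> vecs m" "vadd a w \<in> V" for w
    using assms that by (intro image_eqI[where x = "vadd a w"]) (auto simp: vecs_def vadd_vadd_self)
  then show ?thesis
    using assms by (auto simp: vecs_def vadd_vadd_self subset_iff)
qed

lemma image_eq_fibres_nonempty:
  assumes "\<forall>x \<in> vecs n. f x \<in> vecs m"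
  shows "f ` vecs n = {w \<in> vecs m. card {x \<in> vecs n. f x = w} > 0}"
  using assms by (auto simp: card_gt_0_iff)

definition character :: "bool list \<Rightarrow> bool list \<Rightarrow> int" where
  "character y u = (if dot u y then -1 else 1)"

lemma character_comm: "character y u = character u y"
  by (simp add: character_def dot_comm)

lemma character_Cons:
  "character (c # y) (b # u) = (if b \<and> c then - character y u else character y u)"
  by (simp add: character_def)

lemma character_vadd:
  "length u = length w \<Longrightarrow> character y (vadd u w) = character y u * character y w"
  by (simp add: character_def dot_vadd_left)

lemma sum_character_vecs:
  "u \<in> vecs m \<Longrightarrow> (\<Sum>y\<in>vecs m. character y u) = (if u = replicate m False then 2 ^ m else 0)"
proof (induction m arbitrary: u)
  case 0
  then show ?case by (simp add: vecs_def character_def)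
next
  case (Suc m)
  then obtain b us where u: "u = b # us" and us: "us \<in> vecs m"
    by (auto simp: vecs_def length_Suc_conv)
  have "(\<Sum>y\<in>vecs (Suc m). character y u) =
        (\<Sum>y\<in>vecs m. character (True # y) u) + (\<Sum>y\<in>vecs m. character (False # y) u)"
    unfolding vecs_Suc by (subst sum.union_disjoint) (auto simp: sum.reindex)
  also have "\<dots> = (if b then 0 else 2 * (\<Sum>y\<in>vecs m. character y us))"
    by (simp add: u character_Cons sum_negf)
  finally show ?case
    using Suc.IH[OF us] by (auto simp: u)
qed

definition orth :: "nat \<Rightarrow> bool list set \<Rightarrow> bool list set" where
  "orth m V = {u \<in> vecs m. \<forall>v \<in> V. dot u v = False}"

lemma linear_subspace_orth: "linear_subspace m (orth m V)"
  by (auto simp: linear_subspace_def orth_def vecs_def dot_vadd_left)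

lemma sum_character_subspace:
  assumes V: "linear_subspace m V" and u: "u \<in> vecs m"
  shows "(\<Sum>v\<in>V. character v u) = (if u \<in> orth m V then int (card V) else 0)"
proof (cases "u \<in> orth m V")
  case True
  then show ?thesis
    by (simp add: orth_def character_def dot_comm)
next
  case False
  then obtain v0 where v0: "v0 \<in> V" "dot u v0"
    using u by (auto simp: orth_def)
  have Vsub: "V \<subseteq> vecs m" and Vclosed: "\<forall>v\<in>V. \<forall>w\<in>V. vadd v w \<in> V"
    using V by (auto simp: linear_subspace_def)
  \<comment> \<open>translation by \<open>v\<^sub>0\<close> permutes \<open>V\<close> and flips the sign of every term\<close>
  have "bij_betw (vadd v0) V V"
    using Vsub Vclosed v0(1)
    by (intro bij_betw_byWitness[where f' = "vadd v0"])
       (auto simp: vecs_def subset_iff vadd_vadd_self)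
  then have "(\<Sum>v\<in>V. character v u) = (\<Sum>v\<in>V. character (vadd v0 v) u)"
    using sum.reindex_bij_betw[of "vadd v0" V V "\<lambda>v. character v u"] by simp
  also have "\<dots> = (\<Sum>v\<in>V. - character v u)"
    using Vsub v0 by (intro sum.cong) (auto simp: character_def dot_vadd_right vecs_def subset_iff)
  finally show ?thesis
    using False by (simp add: sum_negf)
qed

definition walsh :: "nat \<Rightarrow> (bool list \<Rightarrow> bool list) \<Rightarrow> bool list \<Rightarrow> int" where
  "walsh n f y = (\<Sum>x\<in>vecs n. character y (f x))"

lemma y_balanced_iff_walsh_eq_0: "y_balanced n f y \<longleftrightarrow> walsh n f y = 0"
proof -
  let ?A = "{x \<in> vecs n. dot (f x) y = False}" and ?B = "{x \<in> vecs n. dot (f x) y = True}"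
  have "card ?A + card ?B = card (?A \<union> ?B)"
    by (rule card_Un_disjoint[symmetric]) auto
  also have "?A \<union> ?B = vecs n"
    by auto
  finally have "card ?A + card ?B = 2 ^ n"
    by (simp add: card_vecs)
  moreover have "walsh n f y = int (card ?A) - int (card ?B)"
    by (simp add: walsh_def character_def sum.If_cases Int_def conj_commute)
  ultimately show ?thesis
    by (auto simp: y_balanced_def)
qed

lemma walsh_y_constant:
  assumes "y_constant n f y" and "x0 \<in> vecs n"
  shows "walsh n f y = 2 ^ n * character y (f x0)"
  using assms by (auto simp: y_constant_def walsh_def character_def card_vecs)

lemma walsh_eq_sum_fibres:
  "walsh n f y = (\<Sum>w\<in>f ` vecs n. int (card {x \<in> vecs n. f x = w}) * character y w)"
  unfolding walsh_def by (subst sum.image_gen[of "vecs n" _ f]) auto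

lemma fibre_card_inversion:
  assumes f: "\<forall>x \<in> vecs n. f x \<in> vecs m" and w: "w \<in> vecs m"
  shows "2 ^ m * int (card {x \<in> vecs n. f x = w}) = (\<Sum>y\<in>vecs m. walsh n f y * character y w)"
proof -
  have "(\<Sum>y\<in>vecs m. walsh n f y * character y w)
      = (\<Sum>y\<in>vecs m. \<Sum>x\<in>vecs n. character y (vadd (f x) w))"
    using f w by (auto simp: walsh_def sum_distrib_right character_vadd vecs_def intro!: sum.cong)
  also have "\<dots> = (\<Sum>x\<in>vecs n. \<Sum>y\<in>vecs m. character y (vadd (f x) w))"
    by (rule sum.swap)
  also have "\<dots> = (\<Sum>x\<in>vecs n. if f x = w then 2 ^ m else 0)"
  proof (rule sum.cong)
    fix x assume "x \<in> vecs n"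
    then have len: "length (f x) = m" "length w = m"
      using f w by (auto simp: vecs_def)
    then have "vadd (f x) w \<in> vecs m"
      by (simp add: vecs_def)
    moreover have "vadd (f x) w = replicate m False \<longleftrightarrow> f x = w"
      using vadd_eq_replicate_False_iff[of "f x" w] len by simp
    ultimately show "(\<Sum>y\<in>vecs m. character y (vadd (f x) w)) = (if f x = w then 2 ^ m else 0)"
      by (simp add: sum_character_vecs)
  qed simp
  finally show ?thesis
    by (simp add: sum.If_cases Int_def conj_commute)
qed

lemma linear_subspace_y_constant: "linear_subspace m {y \<in> vecs m. y_constant n f y}"
proof -
  have "y_constant n f (vadd y z)" if "y_constant n f y" "y_constant n f z" "y \<in> vecs m" "z \<in> vecs m" for y z
    using that by (fastforce simp: y_constant_def vecs_def dot_vadd_right)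
  then show ?thesis
    by (auto simp: linear_subspace_def y_constant_def vecs_def)
qed

lemma fibre_card_fully_balanced:
  assumes f: "\<forall>x \<in> vecs n. f x \<in> vecs m" and fb: "fully_balanced n m f"
    and x0: "x0 \<in> vecs n" and w: "w \<in> vecs m"
  defines "Y \<equiv> {y \<in> vecs m. y_constant n f y}"
  shows "2 ^ m * int (card {x \<in> vecs n. f x = w}) =
    (if vadd (f x0) w \<in> orth m Y then 2 ^ n * int (card Y) else 0)"
proof -
  have walsh_Y: "walsh n f y = (if y_constant n f y then 2 ^ n * character y (f x0) else 0)"
    if "y \<in> vecs m" for y
    using that fb x0 by (auto simp: walsh_y_constant fully_balanced_def y_balanced_iff_walsh_eq_0)
  have len: "length (f x0) = length w"
    using f x0 w by (simp add: vecs_def)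
  have "2 ^ m * int (card {x \<in> vecs n. f x = w}) = (\<Sum>y\<in>vecs m. walsh n f y * character y w)"
    by (rule fibre_card_inversion[OF f w])
  also have "\<dots> = (\<Sum>y\<in>vecs m. if y_constant n f y then 2 ^ n * character y (vadd (f x0) w) else 0)"
    using len by (intro sum.cong) (simp_all add: walsh_Y character_vadd)
  also have "\<dots> = (\<Sum>y\<in>Y. 2 ^ n * character y (vadd (f x0) w))"
    by (simp add: sum.inter_filter Y_def)
  also have "\<dots> = 2 ^ n * (\<Sum>y\<in>Y. character y (vadd (f x0) w))"
    by (simp add: sum_distrib_left)
  finally show ?thesis
    using len w sum_character_subspace[OF linear_subspace_y_constant, of "vadd (f x0) w" m n f]
    by (simp add: Y_def vecs_def)
qed

lemma affine_regular_if_fully_balanced: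
  assumes f: "\<forall>x \<in> vecs n. f x \<in> vecs m" and fb: "fully_balanced n m f"
  shows "affine_subspace m (f ` vecs n) \<and>
    (\<exists>k. \<forall>w \<in> f ` vecs n. card {x \<in> vecs n. f x = w} = k)"
proof -
  define x0 where "x0 = replicate n False"
  define Y where "Y = {y \<in> vecs m. y_constant n f y}"
  define V where "V = orth m Y"
  have x0: "x0 \<in> vecs n" and a: "f x0 \<in> vecs m"
    using f by (auto simp: x0_def vecs_def)
  have Vsub: "V \<subseteq> vecs m"
    by (auto simp: V_def orth_def)
  have "replicate m False \<in> Y"
    unfolding Y_def y_constant_def vecs_def by auto
  then have "card Y > 0"
    by (auto simp: Y_def card_gt_0_iff)
  have fibre: "2 ^ m * int (card {x \<in> vecs n. f x = w}) =
      (if vadd (f x0) w \<in> V then 2 ^ n * int (card Y) else 0)" if "w \<in> vecs m" for w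
    using fibre_card_fully_balanced[OF f fb x0 that] by (simp add: Y_def V_def)
  have "card {x \<in> vecs n. f x = w} > 0 \<longleftrightarrow> vadd (f x0) w \<in> V" if "w \<in> vecs m" for w
  proof -
    have "card {x \<in> vecs n. f x = w} > 0 \<longleftrightarrow> 2 ^ m * int (card {x \<in> vecs n. f x = w}) > 0"
      by (simp add: zero_less_mult_iff)
    also have "\<dots> \<longleftrightarrow> vadd (f x0) w \<in> V"
      using fibre[OF that] \<open>card Y > 0\<close> by (simp add: zero_less_mult_iff)
    finally show ?thesis .
  qed
  then have image: "f ` vecs n = vadd (f x0) ` V"
    unfolding image_eq_fibres_nonempty[OF f] vadd_image_eq[OF a Vsub] by blast
  have "affine_subspace m (f ` vecs n)"
    unfolding affine_subspace_def using a image linear_subspace_orth V_def by blast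
  moreover have "card {x \<in> vecs n. f x = w} = 2 ^ n * card Y div 2 ^ m" if "w \<in> f ` vecs n" for w
  proof -
    have "w \<in> vecs m" "vadd (f x0) w \<in> V"
      using that image by (auto simp: vadd_image_eq[OF a Vsub])
    then have "int (2 ^ m * card {x \<in> vecs n. f x = w}) = int (2 ^ n * card Y)"
      using fibre by simp
    then have "2 ^ m * card {x \<in> vecs n. f x = w} = 2 ^ n * card Y"
      by (simp only: of_nat_eq_iff)
    then show ?thesis
      by (metis nonzero_mult_div_cancel_left power_not_zero zero_neq_numeral)
  qed
  ultimately show ?thesis
    by blast
qed

lemma fully_balanced_if_affine_regular:
  assumes f: "\<forall>x \<in> vecs n. f x \<in> vecs m"
    and a: "a \<in> vecs m" and V: "linear_subspace m V" and image: "f ` vecs n = vadd a ` V"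
    and k: "\<forall>w \<in> f ` vecs n. card {x \<in> vecs n. f x = w} = k"
  shows "fully_balanced n m f"
  unfolding fully_balanced_def
proof
  fix y assume y: "y \<in> vecs m"
  have Vsub: "V \<subseteq> vecs m"
    using V by (simp add: linear_subspace_def)
  show "y_balanced n f y \<or> y_constant n f y"
  proof (cases "y \<in> orth m V")
    case True
    have "dot (f x) y = dot a y" if "x \<in> vecs n" for x
    proof -
      have "f x \<in> vadd a ` V"
        using imageI[OF that, of f] unfolding image .
      then obtain v where v: "v \<in> V" "f x = vadd a v"
        by blast
      have "length a = length v"
        using a Vsub v(1) by (auto simp: vecs_def)
      moreover have "\<not> dot v y"
        using True v(1) by (auto simp: orth_def dot_comm)
      ultimately show ?thesis
        using v(2) by (simp add: dot_vadd_left)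
    qed
    then show ?thesis
      by (auto simp: y_constant_def)
  next
    case False
    have "inj_on (vadd a) V"
      using a Vsub by (intro inj_on_inverseI[where g = "vadd a"]) (auto simp: vecs_def vadd_vadd_self)
    then have "walsh n f y = (\<Sum>v\<in>V. int k * character y (vadd a v))"
      using k by (simp add: walsh_eq_sum_fibres image sum.reindex)
    also have "\<dots> = int k * character y a * (\<Sum>v\<in>V. character v y)"
      using a Vsub by (auto simp: sum_distrib_left character_vadd vecs_def character_comm intro!: sum.cong)
    also have "\<dots> = 0"
      using False by (simp add: sum_character_subspace[OF V y])
    finally show ?thesis
      by (simp add: y_balanced_iff_walsh_eq_0)
  qed
qed

theorem mainTheorem3:
  fixes n m :: nat and f :: "bool list \<Rightarrow> bool list"
  assumes "\<forall>x \<in> vecs n. f x \<in> vecs m"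
  shows "fully_balanced n m f \<longleftrightarrow>
    (affine_subspace m (f ` vecs n) \<and>
     (\<exists>k. \<forall>w \<in> f ` vecs n. card {x \<in> vecs n. f x = w} = k))"
proof
  assume "fully_balanced n m f"
  then show "affine_subspace m (f ` vecs n) \<and> (\<exists>k. \<forall>w \<in> f ` vecs n. card {x \<in> vecs n. f x = w} = k)"
    by (rule affine_regular_if_fully_balanced[OF assms])
next
  assume regular: "affine_subspace m (f ` vecs n) \<and> (\<exists>k. \<forall>w \<in> f ` vecs n. card {x \<in> vecs n. f x = w} = k)"
  then obtain a V where "a \<in> vecs m" "linear_subspace m V" "f ` vecs n = vadd a ` V"
    unfolding affine_subspace_def by (elim conjE bexE exE)
  moreover obtain k where "\<forall>w \<in> f ` vecs n. card {x \<in> vecs n. f x = w} = k"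
    using regular by (elim conjE exE)
  ultimately show "fully_balanced n m f"
    by (rule fully_balanced_if_affine_regular[OF assms])
qed

end
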